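(* Fix an iteration index $k \ge 0$ and an agent index $i \in \{0,1,\dots,n\}$. Suppose the densities $p_j^{(k+1)}$ for $j<i$ and $p_j^{(k)}$ for all $j$ are given. Define $\bar{\gamma}_i^{(k)}$ and $\bar{c}_i^{(k)}$ by $$\bar{\gamma}_i^{(k)}(f) = \sum_{j=0}^{i-1} \int_{\mathcal{F}} \psi(f, g)\, p_j^{(k+1)}(g)\, dg + \sum_{j=i+1}^{n} \int_{\mathcal{F}} \psi(f, g)\, p_j^{(k)}(g)\, dg, \qquad f\in\mathcal{F},$$ $$\bar{c}_i^{(k)}(p) = \int_{\mathcal{F}} p(f)\, \bar{\gamma}_i^{(k)}(f)\, df \quad (p\in\mathcal{P}).$$ Let $$p_i^{(k+1)}(f) = \frac{p_i^{(k)}(f)\exp\big(-\bar{\gamma}_i^{(k)}(f)\big)}{\int_{\mathcal{F}} p_i^{(k)}(g)\exp\big(-\bar{\gamma}_i^{(k)}(g)\big)\, dg}.$$ If $p_i^{(k+1)} \neq p_i^{(k)}$, then there exists $\xi>0$ such that $$\bar{c}_i^{(k)}\big(p_i^{(k+1)}\big) \le \bar{c}_i^{(k)}\big(p_i^{(k)}\big) - \xi .$$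
   Context: Trajectory space: $\mathcal{F} \subseteq \mathbb{R}^{d\times T}$, where $d$ is the state dimension and $T$ is the number of time points. Distribution space: $\mathcal{P}$ is the set of probability density functions $p:\mathcal{F}\to[0,\infty)$ with $\int_{\mathcal{F}} p(f)\,df=1$. There are $n+1$ agents, indexed $0,1,\dots,n$ (index $0$ is the robot). For each iteration $k\ge 0$ and each agent $j$, $p_j^{(k)}\in\mathcal{P}$ is agent $j$'s preference density. The collision penalty function $\psi:\mathcal{F}\times\mathcal{F}\to[0,\infty)$ is symmetric, i.e. $\psi(f,g)=\psi(g,f)$. *)

theory Defs
  imports "HOL-Analysis.Analysis"
begin

text \<open>Trajectories are d x T real matrices, rendered as real^'t^'d; the
trajectory space F is a Borel subset, and integrals over F are Lebesgue
(Bochner) integrals w.r.t. lborel restricted to F.\<close>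

definition density_space :: "('a::euclidean_space) set \<Rightarrow> ('a \<Rightarrow> real) set" where
  "density_space F = {p. (\<forall>f\<in>F. 0 \<le> p f) \<and> set_integrable lborel F p
                         \<and> (LINT f:F|lborel. p f) = 1}"

text \<open>gamma_bar F psi p n i k f: p k j is the density of agent j at iteration k.\<close>
definition gamma_bar ::
  "('a::euclidean_space) set \<Rightarrow> ('a \<Rightarrow> 'a \<Rightarrow> real) \<Rightarrow> (nat \<Rightarrow> nat \<Rightarrow> 'a \<Rightarrow> real)
    \<Rightarrow> nat \<Rightarrow> nat \<Rightarrow> nat \<Rightarrow> 'a \<Rightarrow> real" where
  "gamma_bar F psi p n i k f =
     (\<Sum>j<i. LINT g:F|lborel. psi f g * p (Suc k) j g)
   + (\<Sum>j\<in>{i<..n}. LINT g:F|lborel. psi f g * p k j g)"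

definition c_bar ::
  "('a::euclidean_space) set \<Rightarrow> ('a \<Rightarrow> 'a \<Rightarrow> real) \<Rightarrow> (nat \<Rightarrow> nat \<Rightarrow> 'a \<Rightarrow> real)
    \<Rightarrow> nat \<Rightarrow> nat \<Rightarrow> nat \<Rightarrow> ('a \<Rightarrow> real) \<Rightarrow> real" where
  "c_bar F psi p n i k q = (LINT f:F|lborel. q f * gamma_bar F psi p n i k f)"

end

theory Submission
  imports Defs
begin

text \<open>Write \<open>P\<close> for the old density of agent \<open>i\<close>, \<open>G \<ge> 0\<close> for its
potential \<open>\<gamma>\<close>, \<open>m = \<integral> P G\<close> for the old cost and \<open>Z = \<integral> P exp (- G)\<close>,
so that the new density is \<open>P exp (- G) / Z\<close>.  As \<open>exp (- t)\<close> is decreasing,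
\<open>(G - m) (exp (- G) - exp (- m)) \<le> 0\<close> pointwise; integrating against \<open>P\<close> gives
\<open>\<integral> P G exp (- G) \<le> m Z\<close>, i.e. the new cost is at most \<open>m\<close>.  Equality forces
\<open>G = m\<close> almost everywhere on \<open>{P \<noteq> 0}\<close>; then \<open>Z = exp (- m)\<close> and the update
leaves \<open>P\<close> unchanged.\<close>

lemma diff_mult_exp_neg_diff_nonpos:
  fixes x m :: real
  shows "(x - m) * (exp (- x) - exp (- m)) \<le> 0"
  by (cases "x \<le> m") (auto simp: mult_nonpos_nonneg mult_nonneg_nonpos)

lemma set_integral_eq_restrict_space:
  fixes f :: "'a \<Rightarrow> 'b::{banach, second_countable_topology}"
  assumes "\<Omega> \<inter> space M \<in> sets M"
  shows "(LINT x:\<Omega>|M. f x) = integral\<^sup>L (restrict_space M \<Omega>) f"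
  using assms by (simp add: set_lebesgue_integral_def integral_restrict_space)

locale gibbs_reweighting =
  fixes M :: "'a measure" and P G :: "'a \<Rightarrow> real"
  assumes P_nonneg: "\<And>x. x \<in> space M \<Longrightarrow> 0 \<le> P x"
    and G_nonneg: "\<And>x. x \<in> space M \<Longrightarrow> 0 \<le> G x"
    and integrable_P: "integrable M P"
    and integral_P: "integral\<^sup>L M P = 1"
    and integrable_cost: "integrable M (\<lambda>x. P x * G x)"
begin

definition cost :: real where
  "cost = (\<integral>x. P x * G x \<partial>M)"

definition normalizer :: real where
  "normalizer = (\<integral>x. P x * exp (- G x) \<partial>M)"

definition reweighted :: "'a \<Rightarrow> real" where
  "reweighted x = P x * exp (- G x) / normalizer"

text \<open>\<open>G\<close> itself need not be measurable: wherever \<open>P x \<noteq> 0\<close> it is recovered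
as \<open>(P x * G x) / P x\<close>.\<close>
lemma measurable_weighted:
  assumes h: "h \<in> borel_measurable borel"
  shows "(\<lambda>x. P x * h (G x)) \<in> borel_measurable M"
proof -
  have P: "P \<in> borel_measurable M" and PG: "(\<lambda>x. P x * G x) \<in> borel_measurable M"
    using integrable_P integrable_cost by auto
  have "(\<lambda>x. P x * h (P x * G x / P x)) \<in> borel_measurable M"
    using P PG h by measurable
  moreover have "(\<lambda>x. P x * h (P x * G x / P x)) = (\<lambda>x. P x * h (G x))"
    by (auto simp: fun_eq_iff)
  ultimately show ?thesis
    by simp
qed

lemma integrable_weighted: "integrable M (\<lambda>x. P x * exp (- G x))"
proof (rule Bochner_Integration.integrable_bound[OF integrable_P])
  show "(\<lambda>x. P x * exp (- G x)) \<in> borel_measurable M"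
    by (rule measurable_weighted) simp
  show "AE x in M. norm (P x * exp (- G x)) \<le> norm (P x)"
    using P_nonneg G_nonneg by (auto intro!: AE_I2 mult_left_le)
qed

lemma integrable_weighted_cost: "integrable M (\<lambda>x. P x * (G x * exp (- G x)))"
proof (rule Bochner_Integration.integrable_bound[OF integrable_cost])
  show "(\<lambda>x. P x * (G x * exp (- G x))) \<in> borel_measurable M"
    by (rule measurable_weighted[where h = "\<lambda>t. t * exp (- t)"]) simp
  have "norm (P x * (G x * exp (- G x))) \<le> norm (P x * G x)" if "x \<in> space M" for x
    using P_nonneg[OF that] G_nonneg[OF that] by (simp add: abs_mult mult_left_mono mult_left_le)
  then show "AE x in M. norm (P x * (G x * exp (- G x))) \<le> norm (P x * G x)"
    by (auto intro!: AE_I2)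
qed

lemma normalizer_pos: "0 < normalizer"
proof -
  have "normalizer \<noteq> 0"
  proof
    assume "normalizer = 0"
    then have "AE x in M. P x * exp (- G x) = 0"
      using integral_nonneg_eq_0_iff_AE[OF integrable_weighted] P_nonneg
      by (simp add: normalizer_def)
    then have "AE x in M. P x = 0"
      by eventually_elim simp
    then have "integral\<^sup>L M P = 0"
      by (rule integral_eq_zero_AE)
    then show False
      using integral_P by simp
  qed
  moreover have "0 \<le> normalizer"
    unfolding normalizer_def using P_nonneg by (simp add: integral_nonneg)
  ultimately show ?thesis
    by simp
qed

lemma covariance_integrand_eq:
  "P x * ((G x - cost) * (exp (- G x) - exp (- cost)))
     = P x * (G x * exp (- G x)) - cost * (P x * exp (- G x))
       - exp (- cost) * (P x * G x) + cost * exp (- cost) * P x"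
  by (simp add: algebra_simps)

lemma integrable_covariance_exp:
  "integrable M (\<lambda>x. P x * ((G x - cost) * (exp (- G x) - exp (- cost))))"
  unfolding covariance_integrand_eq
  using integrable_weighted_cost integrable_weighted integrable_cost integrable_P by simp

lemma integral_covariance_exp:
  "(\<integral>x. P x * ((G x - cost) * (exp (- G x) - exp (- cost))) \<partial>M)
     = (\<integral>x. P x * (G x * exp (- G x)) \<partial>M) - cost * normalizer"
  unfolding covariance_integrand_eq
  using integrable_weighted_cost integrable_weighted integrable_cost integrable_P integral_P
  by (simp add: cost_def normalizer_def)

lemma weighted_cost_less:
  assumes "\<not> (AE x in M. P x = 0 \<or> G x = cost)"
  shows "(\<integral>x. P x * (G x * exp (- G x)) \<partial>M) < cost * normalizer"
proof -
  define h where "h = (\<lambda>x. - (P x * ((G x - cost) * (exp (- G x) - exp (- cost)))))"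
  have h_nonneg: "x \<in> space M \<Longrightarrow> 0 \<le> h x" for x
    unfolding h_def using P_nonneg diff_mult_exp_neg_diff_nonpos
    by (simp add: mult_nonneg_nonpos)
  have h_integrable: "integrable M h"
    unfolding h_def using integrable_covariance_exp by simp
  have "integral\<^sup>L M h \<noteq> 0"
  proof
    assume "integral\<^sup>L M h = 0"
    then have "AE x in M. h x = 0"
      using integral_nonneg_eq_0_iff_AE[OF h_integrable] h_nonneg by simp
    then have "AE x in M. P x = 0 \<or> G x = cost"
      by eventually_elim (auto simp: h_def)
    with assms show False ..
  qed
  moreover have "0 \<le> integral\<^sup>L M h"
    using h_nonneg by (simp add: integral_nonneg)
  moreover have "integral\<^sup>L M h = cost * normalizer - (\<integral>x. P x * (G x * exp (- G x)) \<partial>M)"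
    using integral_covariance_exp by (simp add: h_def)
  ultimately show ?thesis
    by simp
qed

lemma reweighted_AE_eq:
  assumes "AE x in M. P x = 0 \<or> G x = cost"
  shows "AE x in M. reweighted x = P x"
proof -
  have "AE x in M. P x * exp (- G x) = exp (- cost) * P x"
    using assms by eventually_elim auto
  then have normalizer_eq: "normalizer = exp (- cost)"
    unfolding normalizer_def
    using integral_cong_AE[of _ M "\<lambda>x. exp (- cost) * P x"] integrable_P integrable_weighted integral_P
    by (simp add: borel_measurable_integrable)
  from assms show ?thesis
    by (rule eventually_mono) (auto simp: reweighted_def normalizer_eq)
qed

theorem cost_reweighted_less:
  assumes "\<not> (AE x in M. reweighted x = P x)"
  shows "(\<integral>x. reweighted x * G x \<partial>M) < cost"
proof -
  have "(\<integral>x. reweighted x * G x \<partial>M) = (\<integral>x. P x * (G x * exp (- G x)) \<partial>M) / normalizer"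
    by (simp add: reweighted_def algebra_simps)
  also have "\<dots> < cost"
  proof -
    have "\<not> (AE x in M. P x = 0 \<or> G x = cost)"
      using reweighted_AE_eq assms by blast
    then show ?thesis
      using weighted_cost_less normalizer_pos by (simp add: divide_less_eq)
  qed
  finally show ?thesis .
qed

end

lemma density_space_iff_restrict_space:
  assumes "F \<in> sets lborel"
  shows "p \<in> density_space F \<longleftrightarrow> (\<forall>f\<in>F. 0 \<le> p f)
           \<and> integrable (restrict_space lborel F) p \<and> integral\<^sup>L (restrict_space lborel F) p = 1"
  using assms by (simp add: density_space_def set_integrable_eq set_integral_eq_restrict_space)

lemma gamma_bar_nonneg:
  assumes "\<And>g. g \<in> F \<Longrightarrow> 0 \<le> psi f g"
    and "\<And>j g. j < i \<Longrightarrow> g \<in> F \<Longrightarrow> 0 \<le> p (Suc k) j g"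
    and "\<And>j g. i < j \<Longrightarrow> j \<le> n \<Longrightarrow> g \<in> F \<Longrightarrow> 0 \<le> p k j g"
  shows "0 \<le> gamma_bar F psi p n i k f"
  unfolding gamma_bar_def set_lebesgue_integral_def
  using assms by (auto intro!: add_nonneg_nonneg sum_nonneg integral_nonneg split: split_indicator)

theorem lemma1:
  fixes F :: "(real^'t^'d) set"
    and psi :: "real^'t^'d \<Rightarrow> real^'t^'d \<Rightarrow> real"
    and p :: "nat \<Rightarrow> nat \<Rightarrow> real^'t^'d \<Rightarrow> real"
    and n k i :: nat
  assumes F_meas: "F \<in> sets lborel"
    and psi_meas: "(\<lambda>(f, g). psi f g) \<in> borel_measurable (lborel \<Otimes>\<^sub>M lborel)"
    and psi_nonneg: "\<And>f g. f \<in> F \<Longrightarrow> g \<in> F \<Longrightarrow> 0 \<le> psi f g"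
    and psi_sym: "\<And>f g. f \<in> F \<Longrightarrow> g \<in> F \<Longrightarrow> psi f g = psi g f"
    and i_le: "i \<le> n"
    and p_k: "\<And>j. j \<le> n \<Longrightarrow> p k j \<in> density_space F"
    and p_Suc_k: "\<And>j. j < i \<Longrightarrow> p (Suc k) j \<in> density_space F"
    and int_before: "\<And>f j. f \<in> F \<Longrightarrow> j < i \<Longrightarrow>
                       set_integrable lborel F (\<lambda>g. psi f g * p (Suc k) j g)"
    and int_after: "\<And>f j. f \<in> F \<Longrightarrow> i < j \<Longrightarrow> j \<le> n \<Longrightarrow>
                       set_integrable lborel F (\<lambda>g. psi f g * p k j g)"
    and cost_finite: "set_integrable lborel F (\<lambda>f. p k i f * gamma_bar F psi p n i k f)"
    and update: "\<And>f. f \<in> F \<Longrightarrow> p (Suc k) i f =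
        p k i f * exp (- gamma_bar F psi p n i k f) /
        (LINT g:F|lborel. p k i g * exp (- gamma_bar F psi p n i k g))"
    and changed: "\<not> (AE f in lborel. f \<in> F \<longrightarrow> p (Suc k) i f = p k i f)"
  shows "\<exists>\<xi>>0. c_bar F psi p n i k (p (Suc k) i) \<le> c_bar F psi p n i k (p k i) - \<xi>"
proof -
  let ?M = "restrict_space lborel F" and ?G = "gamma_bar F psi p n i k"
  have F: "F \<inter> space lborel \<in> sets lborel"
    using F_meas by simp
  interpret gibbs_reweighting ?M "p k i" ?G
  proof
    show "x \<in> space ?M \<Longrightarrow> 0 \<le> ?G x" for x
      using p_k p_Suc_k psi_nonneg
      by (intro gamma_bar_nonneg) (auto simp: density_space_def space_restrict_space)
    show "integrable ?M (\<lambda>x. p k i x * ?G x)"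
      using cost_finite F by (simp add: set_integrable_eq)
  qed (use p_k[OF i_le] F_meas in \<open>auto simp: density_space_iff_restrict_space\<close>)
  have updated: "p (Suc k) i x = reweighted x" if "x \<in> space ?M" for x
    using update that F by (simp add: reweighted_def normalizer_def set_integral_eq_restrict_space)
  have "c_bar F psi p n i k (p (Suc k) i) = (\<integral>x. p (Suc k) i x * ?G x \<partial>?M)"
    using F by (simp add: c_bar_def set_integral_eq_restrict_space)
  also have "\<dots> = (\<integral>x. reweighted x * ?G x \<partial>?M)"
    by (rule Bochner_Integration.integral_cong) (simp_all add: updated)
  moreover have "c_bar F psi p n i k (p k i) = cost"
    using F by (simp add: c_bar_def cost_def set_integral_eq_restrict_space)
  moreover have "\<not> (AE x in ?M. reweighted x = p k i x)"
    using changed F updated by (simp add: AE_restrict_space_iff)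
  ultimately show ?thesis
    using cost_reweighted_less by (intro exI[of _ "cost - (\<integral>x. reweighted x * ?G x \<partial>?M)"]) auto
qed

end
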